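(* Let $G$ be a bipartite instance, let $(u,v)\in E$ with $u$'s deadline earlier than $v$'s, and fix the ranks $\mathbf y_{-uv}$ of all vertices other than $u,v$. Let $\tau$ be the marginal rank of $u$ w.r.t. $\mathbf y_{-uv}$ in $G-\{v\}$ and, for $y_u\in[0,1]$, let $\theta(y_u)$ be the marginal rank of $v$ in $G$ w.r.t. the ranks $(y_u,\mathbf y_{-uv})$. Then there exists $\theta\in[0,1]$ such that $\theta(y_u)=\theta$ for all $y_u>\tau$.
   Context: Fully online matching model on a graph $G=(V,E)$: each step is the arrival or the deadline of a vertex; at arrival, edges to previously arrived vertices are revealed; every neighbor of $v$ arrives before $v$'s deadline; at a vertex's deadline, if unmatched, it is irrevocably matched to an unmatched neighbor or left unmatched. Ranking: each vertex $w$ has a rank $y_w\in[0,1)$; at the deadline of an unmatched vertex $w$, if it has unmatched neighbors it is matched to the unmatched neighbor of minimum rank. If an edge $(a,b)$ is matched at $a$'s deadline, $a$ is called active and $b$ passive. Marginal rank: for a vertex $w$ in a graph $H$ and fixed ranks of all other vertices of $H$, the marginal rank of $w$ is the largest value $\theta\in[0,1]$ such that $w$ is passive in the matching produced by Ranking on $H$ when $y_w=\theta^-$ (rank infinitesimally below $\theta$); it equals $0$ if no such value exists. *)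

theory Defs
  imports Complex_Main
begin

datatype 'v event = Arr 'v | Dl 'v

definition valid_instance :: "'v event list \<Rightarrow> ('v \<Rightarrow> 'v \<Rightarrow> bool) \<Rightarrow> bool" where
  "valid_instance evs E \<longleftrightarrow>
     distinct evs \<and>
     (\<forall>v. Arr v \<in> set evs \<longleftrightarrow> Dl v \<in> set evs) \<and>
     (\<forall>a b. E a b \<longrightarrow> E b a) \<and>
     (\<forall>a. \<not> E a a) \<and>
     (\<forall>a b. E a b \<longrightarrow> Arr a \<in> set evs \<and> Arr b \<in> set evs) \<and>
     (\<forall>i j v. i < length evs \<and> j < length evs \<and> evs ! i = Dl v \<and> evs ! j = Arr v
        \<longrightarrow> j < i) \<and>
     (\<forall>i j v w. i < length evs \<and> j < length evs \<and> E v w \<and> evs ! i = Dl v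
        \<and> evs ! j = Arr w \<longrightarrow> j < i)"

definition bipartite_instance :: "'v event list \<Rightarrow> ('v \<Rightarrow> 'v \<Rightarrow> bool) \<Rightarrow> bool" where
  "bipartite_instance evs E \<longleftrightarrow> valid_instance evs E \<and>
     (\<exists>L :: 'v set. \<forall>a b. E a b \<longrightarrow> (a \<in> L \<longleftrightarrow> b \<notin> L))"

definition deadline_before :: "'v event list \<Rightarrow> 'v \<Rightarrow> 'v \<Rightarrow> bool" where
  "deadline_before evs u v \<longleftrightarrow>
     (\<exists>i j. i < j \<and> j < length evs \<and> evs ! i = Dl u \<and> evs ! j = Dl v)"

definition remove_evs :: "'v event list \<Rightarrow> 'v \<Rightarrow> 'v event list" where
  "remove_evs evs v = filter (\<lambda>e. e \<noteq> Arr v \<and> e \<noteq> Dl v) evs"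

definition remove_E :: "('v \<Rightarrow> 'v \<Rightarrow> bool) \<Rightarrow> 'v \<Rightarrow> 'v \<Rightarrow> 'v \<Rightarrow> bool" where
  "remove_E E v = (\<lambda>a b. E a b \<and> a \<noteq> v \<and> b \<noteq> v)"

text \<open>State: arrived vertices, partner map, set of passive vertices.
Ties in rank are broken by the (fixed) linear order on vertex names.\<close>

type_synonym 'v rstate = "'v set \<times> ('v \<Rightarrow> 'v option) \<times> 'v set"

definition min_rank :: "('v::linorder \<Rightarrow> real) \<Rightarrow> 'v set \<Rightarrow> 'v" where
  "min_rank y C = (THE x. x \<in> C \<and> (\<forall>z\<in>C. y x < y z \<or> (y x = y z \<and> x \<le> z)))"

fun rank_step :: "('v::linorder \<Rightarrow> 'v \<Rightarrow> bool) \<Rightarrow> ('v \<Rightarrow> real) \<Rightarrow> 'v rstate \<Rightarrow> 'v event \<Rightarrow> 'v rstate" where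
  "rank_step E y (A, m, P) (Arr w) = (insert w A, m, P)"
| "rank_step E y (A, m, P) (Dl w) =
     (if m w = None \<and> (\<exists>x\<in>A. E w x \<and> m x = None) then
        (let x = min_rank y {x \<in> A. E w x \<and> m x = None}
         in (A, m(w := Some x, x := Some w), insert x P))
      else (A, m, P))"

definition ranking :: "'v::linorder event list \<Rightarrow> ('v \<Rightarrow> 'v \<Rightarrow> bool) \<Rightarrow> ('v \<Rightarrow> real) \<Rightarrow> 'v rstate" where
  "ranking evs E y = foldl (rank_step E y) ({}, (\<lambda>_. None), {}) evs"

definition is_passive :: "'v::linorder event list \<Rightarrow> ('v \<Rightarrow> 'v \<Rightarrow> bool) \<Rightarrow> ('v \<Rightarrow> real) \<Rightarrow> 'v \<Rightarrow> bool" where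
  "is_passive evs E y w \<longleftrightarrow> w \<in> snd (snd (ranking evs E y))"

definition passive_below :: "'v::linorder event list \<Rightarrow> ('v \<Rightarrow> 'v \<Rightarrow> bool) \<Rightarrow> ('v \<Rightarrow> real) \<Rightarrow> 'v \<Rightarrow> real \<Rightarrow> bool" where
  "passive_below evs E y w \<theta> \<longleftrightarrow>
     (\<exists>\<epsilon>>0. \<forall>t. \<theta> - \<epsilon> < t \<and> t < \<theta> \<longrightarrow> is_passive evs E (y(w := t)) w)"

definition marginal_rank :: "'v::linorder event list \<Rightarrow> ('v \<Rightarrow> 'v \<Rightarrow> bool) \<Rightarrow> ('v \<Rightarrow> real) \<Rightarrow> 'v \<Rightarrow> real" where
  "marginal_rank evs E y w =
     (let S = {\<theta> \<in> {0..1}. passive_below evs E y w \<theta>} in if S = {} then 0 else Sup S)"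

end

(*
  As long as v is unmatched, Ranking on G behaves exactly as on G - {v}. For y_u above the
  marginal rank of u in G - {v}, u is never passive there, so in G it is never chosen before v
  gets matched; nor at that step, because u is matched by v's deadline (at u's deadline, v is an
  unmatched neighbour of u). Raising the rank of a vertex that is never chosen does not change a
  run, so the run of G up to the moment v is matched, and with it the passivity of v, is the same
  for every such y_u; hence so is the marginal rank of v.
*)

theory Submission
  imports Defs "HOL-Library.Product_Lexorder"
begin

definition is_min_rank :: "('v::linorder \<Rightarrow> real) \<Rightarrow> 'v set \<Rightarrow> 'v \<Rightarrow> bool" where
  "is_min_rank y C x \<longleftrightarrow> x \<in> C \<and> (\<forall>z\<in>C. y x < y z \<or> (y x = y z \<and> x \<le> z))"

lemma min_rank_eqI: "is_min_rank y C x \<Longrightarrow> min_rank y C = x"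
  unfolding min_rank_def is_min_rank_def
  by (rule the_equality) (auto, metis antisym less_asym)

lemma is_min_rank_min_rank:
  assumes "finite C" "C \<noteq> {}"
  shows "is_min_rank y C (min_rank y C)"
proof -
  \<comment> \<open>With ties broken by name, the rank order is the lexicographic order on \<open>(y x, x)\<close>.\<close>
  have "Min ((\<lambda>z. (y z, z)) ` C) \<in> (\<lambda>z. (y z, z)) ` C"
    using assms by (intro Min_in) auto
  then obtain x where x: "x \<in> C" "(y x, x) = Min ((\<lambda>z. (y z, z)) ` C)"
    by auto
  have "(y x, x) \<le> (y z, z)" if "z \<in> C" for z
    unfolding x(2) using assms(1) that by simp
  then have "is_min_rank y C x"
    unfolding is_min_rank_def using x(1) by (auto simp: less_le)
  then show ?thesis by (simp add: min_rank_eqI)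
qed

lemma is_min_rank_restrict:
  assumes "is_min_rank y C x" "x \<in> D" "D \<subseteq> C" "\<forall>z\<in>D. y' z = y z"
  shows "is_min_rank y' D x"
  using assms unfolding is_min_rank_def by auto

definition candidates :: "('v \<Rightarrow> 'v \<Rightarrow> bool) \<Rightarrow> 'v set \<Rightarrow> ('v \<Rightarrow> 'v option) \<Rightarrow> 'v \<Rightarrow> 'v set" where
  "candidates E A m w = {x \<in> A. E w x \<and> m x = None}"

lemma finite_candidates: "finite A \<Longrightarrow> finite (candidates E A m w)"
  by (simp add: candidates_def)

lemma candidates_remove:
  "candidates (remove_E E v) (A - {v}) m w = (if w = v then {} else candidates E A m w - {v})"
  by (auto simp: candidates_def remove_E_def)

lemma rank_step_Dl_match:
  assumes "m w = None" "is_min_rank y (candidates E A m w) x"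
  shows "rank_step E y (A, m, P) (Dl w) = (A, m(w := Some x, x := Some w), insert x P)"
proof -
  have "\<exists>x\<in>A. E w x \<and> m x = None"
    using assms(2) by (auto simp: is_min_rank_def candidates_def)
  moreover have "min_rank y {x \<in> A. E w x \<and> m x = None} = x"
    using assms(2) min_rank_eqI by (simp add: candidates_def)
  ultimately show ?thesis using assms(1) by simp
qed

lemma rank_step_Dl_idle:
  "\<not> (m w = None \<and> candidates E A m w \<noteq> {}) \<Longrightarrow> rank_step E y (A, m, P) (Dl w) = (A, m, P)"
  by (auto simp: candidates_def)

lemma rank_step_cases [consumes 2, case_names arrival idle match]:
  assumes "finite A" "rank_step E y (A, m, P) e = (A', m', P')"
  obtains (arrival) w where "e = Arr w" "A' = insert w A" "m' = m" "P' = P"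
  | (idle) w where "e = Dl w" "\<not> (m w = None \<and> candidates E A m w \<noteq> {})"
      "A' = A" "m' = m" "P' = P"
  | (match) w x where "e = Dl w" "m w = None" "is_min_rank y (candidates E A m w) x"
      "A' = A" "m' = m(w := Some x, x := Some w)" "P' = insert x P"
proof (cases e)
  case (Arr w)
  then show ?thesis using arrival assms(2) by simp
next
  case (Dl w)
  show ?thesis
  proof (cases "m w = None \<and> candidates E A m w \<noteq> {}")
    case True
    define x where "x = min_rank y (candidates E A m w)"
    have x: "is_min_rank y (candidates E A m w) x"
      unfolding x_def using True finite_candidates[OF assms(1)] by (intro is_min_rank_min_rank) auto
    have "(A', m', P') = (A, m(w := Some x, x := Some w), insert x P)"
      using assms(2) rank_step_Dl_match[OF _ x] Dl True by simp
    then show ?thesis using match[OF Dl _ x] True by simp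
  next
    case False
    have "(A', m', P') = (A, m, P)"
      using assms(2) rank_step_Dl_idle[OF False] Dl by simp
    then show ?thesis using idle[OF Dl False] by simp
  qed
qed

fun state_extends :: "'v rstate \<Rightarrow> 'v rstate \<Rightarrow> bool" where
  "state_extends (A, m, P) (A', m', P') \<longleftrightarrow>
     (finite A \<longrightarrow> finite A') \<and> A \<subseteq> A' \<and> P \<subseteq> P' \<and>
     dom m \<subseteq> dom m' \<and> (P' - P) \<inter> dom m = {}"

lemma state_extends_refl: "state_extends s s"
  by (cases s) auto

lemma state_extends_trans:
  "state_extends (A1, m1, P1) (A2, m2, P2) \<Longrightarrow> state_extends (A2, m2, P2) (A3, m3, P3) \<Longrightarrow>
   state_extends (A1, m1, P1) (A3, m3, P3)"
  unfolding state_extends.simps by blast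

lemma rank_step_extends:
  assumes "finite A" "rank_step E y (A, m, P) e = (A', m', P')"
  shows "state_extends (A, m, P) (A', m', P')"
  using assms
proof (cases rule: rank_step_cases)
  case (arrival w)
  then show ?thesis using assms(1) by auto
next
  case (idle w)
  then show ?thesis using assms(1) by simp
next
  case (match w x)
  then have "m x = None" by (simp add: is_min_rank_def candidates_def)
  then show ?thesis unfolding match(4-6) by auto
qed

lemma rank_run_extends:
  "finite A \<Longrightarrow> state_extends (A, m, P) (foldl (rank_step E y) (A, m, P) evs)"
proof (induction evs arbitrary: A m P)
  case Nil
  then show ?case by (simp add: state_extends_refl)
next
  case (Cons e evs)
  obtain A' m' P' where step: "rank_step E y (A, m, P) e = (A', m', P')"
    by (metis prod_cases3)
  have ext: "state_extends (A, m, P) (A', m', P')"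
    using rank_step_extends[OF Cons.prems step] .
  then have "finite A'" using Cons.prems by simp
  then have "state_extends (A', m', P') (foldl (rank_step E y) (A', m', P') evs)"
    by (rule Cons.IH)
  moreover have "foldl (rank_step E y) (A, m, P) (e # evs) = foldl (rank_step E y) (A', m', P') evs"
    using step by simp
  ultimately show ?case using ext by (metis prod_cases3 state_extends_trans)
qed

lemma rank_run_passive_mono:
  "finite A \<Longrightarrow> P \<subseteq> snd (snd (foldl (rank_step E y) (A, m, P) evs))"
  using rank_run_extends[of A m P E y evs] by (cases "foldl (rank_step E y) (A, m, P) evs") auto

lemma rank_run_passive_matched:
  assumes "finite A" "m v \<noteq> None"
  shows "v \<in> snd (snd (foldl (rank_step E y) (A, m, P) evs)) \<longleftrightarrow> v \<in> P"
  using rank_run_extends[of A m P E y evs] assms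
  by (cases "foldl (rank_step E y) (A, m, P) evs") auto

lemma is_min_rank_raise:
  assumes "is_min_rank y C x" "x \<noteq> u" "\<forall>w. w \<noteq> u \<longrightarrow> y' w = y w" "y u \<le> y' u"
  shows "is_min_rank y' C x"
proof -
  have "y' x < y' z \<or> (y' x = y' z \<and> x \<le> z)" if "z \<in> C" for z
  proof -
    have "y x < y z \<or> (y x = y z \<and> x \<le> z)" using assms(1) that by (simp add: is_min_rank_def)
    moreover have "y' x = y x" using assms(2,3) by simp
    moreover have "y z \<le> y' z" using assms(3,4) by (cases "z = u") auto
    ultimately show ?thesis by (cases "y z < y' z") auto
  qed
  then show ?thesis using assms(1) unfolding is_min_rank_def by blast
qed

lemma rank_step_raise_unselected:
  assumes "finite A" "\<forall>w. w \<noteq> u \<longrightarrow> y' w = y w" "y u \<le> y' u"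
    "rank_step E y (A, m, P) e = (A', m', P')" "u \<notin> P'"
  shows "rank_step E y' (A, m, P) e = (A', m', P')"
  using assms(1,4)
proof (cases rule: rank_step_cases)
  case (arrival w)
  then show ?thesis by simp
next
  case (idle w)
  then show ?thesis using rank_step_Dl_idle[OF idle(2)] by (simp del: rank_step.simps)
next
  case (match w x)
  then have "x \<noteq> u" using assms(5) by auto
  then have "is_min_rank y' (candidates E A m w) x"
    using is_min_rank_raise[OF match(3) _ assms(2,3)] by blast
  then show ?thesis using match rank_step_Dl_match by (simp del: rank_step.simps)
qed

lemma rank_run_raise_unselected:
  assumes "\<forall>w. w \<noteq> u \<longrightarrow> y' w = y w" "y u \<le> y' u"
  shows "finite A \<Longrightarrow> u \<notin> snd (snd (foldl (rank_step E y) (A, m, P) evs)) \<Longrightarrow>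
    foldl (rank_step E y') (A, m, P) evs = foldl (rank_step E y) (A, m, P) evs"
proof (induction evs arbitrary: A m P)
  case Nil
  then show ?case by simp
next
  case (Cons e evs)
  obtain A' m' P' where step: "rank_step E y (A, m, P) e = (A', m', P')"
    by (metis prod_cases3)
  have fin: "finite A'" using rank_step_extends[OF Cons.prems(1) step] Cons.prems(1) by simp
  have unsel: "u \<notin> snd (snd (foldl (rank_step E y) (A', m', P') evs))"
    using Cons.prems(2) step by simp
  then have "u \<notin> P'" using rank_run_passive_mono[OF fin] by blast
  then have "rank_step E y' (A, m, P) e = (A', m', P')"
    using rank_step_raise_unselected[OF Cons.prems(1) assms step] by blast
  then show ?case using Cons.IH[OF fin unsel] step by simp
qed

lemma is_passive_lower_rank:
  assumes "is_passive evs E (y(u := a)) u" "t \<le> a"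
  shows "is_passive evs E (y(u := t)) u"
proof (rule ccontr)
  assume not_passive: "\<not> is_passive evs E (y(u := t)) u"
  have "foldl (rank_step E (y(u := a))) ({}, \<lambda>_. None, {}) evs =
        foldl (rank_step E (y(u := t))) ({}, \<lambda>_. None, {}) evs"
    by (rule rank_run_raise_unselected) (use assms(2) not_passive in \<open>auto simp: is_passive_def ranking_def\<close>)
  then show False using assms(1) not_passive by (simp add: is_passive_def ranking_def)
qed

lemma bdd_above_passive_ranks: "bdd_above {\<theta> \<in> {0..1}. passive_below evs E y w \<theta>}"
  by (rule bdd_aboveI[where M = 1]) simp

lemma marginal_rank_in_unit_interval: "marginal_rank evs E y w \<in> {0..1}"
proof (cases "{\<theta> \<in> {0..1}. passive_below evs E y w \<theta>} = {}")
  case True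
  then show ?thesis by (simp add: marginal_rank_def)
next
  let ?S = "{\<theta> \<in> {0..1}. passive_below evs E y w \<theta>}"
  case False
  then obtain \<theta> where \<theta>: "\<theta> \<in> ?S" by blast
  then have "0 \<le> \<theta>" by simp
  also have "\<theta> \<le> Sup ?S" by (rule cSup_upper[OF \<theta> bdd_above_passive_ranks])
  finally have "0 \<le> Sup ?S" .
  moreover have "Sup ?S \<le> 1" by (rule cSup_least[OF False]) simp
  ultimately show ?thesis using False by (simp add: marginal_rank_def Let_def)
qed

lemma not_passive_above_marginal_rank:
  assumes "a \<in> {0..1}" "marginal_rank evs E y u < a"
  shows "\<not> is_passive evs E (y(u := a)) u"
proof
  let ?S = "{\<theta> \<in> {0..1}. passive_below evs E y u \<theta>}"
  assume passive_at_a: "is_passive evs E (y(u := a)) u"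
  have "is_passive evs E (y(u := t)) u" if "t < a" for t
    using is_passive_lower_rank[OF passive_at_a] that by simp
  then have "passive_below evs E y u a"
    unfolding passive_below_def by (intro exI[where x = 1]) auto
  then have a: "a \<in> ?S" using assms(1) by simp
  then have "marginal_rank evs E y u = Sup ?S"
    by (auto simp: marginal_rank_def Let_def)
  moreover have "a \<le> Sup ?S" by (rule cSup_upper[OF a bdd_above_passive_ranks])
  ultimately show False using assms(2) by simp
qed

lemma rank_step_remove_unmatched:
  assumes "finite A" "rank_step E y (A, m, P) e = (A', m', P')" "m' v = None"
    "\<forall>w. w \<noteq> v \<longrightarrow> yH w = y w"
  shows "foldl (rank_step (remove_E E v) yH) (A - {v}, m, P) (remove_evs [e] v) = (A' - {v}, m', P')"
  using assms(1,2)
proof (cases rule: rank_step_cases)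
  case (arrival w)
  then show ?thesis by (cases "w = v") (auto simp: remove_evs_def insert_Diff_if)
next
  case (idle w)
  show ?thesis
  proof (cases "w = v")
    case True
    then show ?thesis using idle by (simp add: remove_evs_def)
  next
    case False
    then have "\<not> (m w = None \<and> candidates (remove_E E v) (A - {v}) m w \<noteq> {})"
      using idle(2) by (auto simp: candidates_remove)
    then show ?thesis
      using idle False rank_step_Dl_idle by (simp add: remove_evs_def del: rank_step.simps)
  qed
next
  case (match w x)
  then have "w \<noteq> v" "x \<noteq> v" using assms(3) by (auto split: if_splits)
  have "is_min_rank yH (candidates E A m w - {v}) x"
    using match(3) \<open>x \<noteq> v\<close> assms(4)
    by (intro is_min_rank_restrict[OF match(3)]) (auto simp: is_min_rank_def)
  then have "is_min_rank yH (candidates (remove_E E v) (A - {v}) m w) x"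
    using \<open>w \<noteq> v\<close> by (simp add: candidates_remove)
  then show ?thesis
    using match \<open>w \<noteq> v\<close> rank_step_Dl_match by (simp add: remove_evs_def del: rank_step.simps)
qed

lemma not_passive_at_step_matching:
  assumes "finite A" "rank_step E y (A, m, P) e = (A', m', P')" "m v = None" "m' v \<noteq> None"
    "u \<notin> P" "u \<noteq> v" "e = Dl v \<Longrightarrow> m u \<noteq> None"
  shows "u \<notin> P'"
  using assms(1,2)
proof (cases rule: rank_step_cases)
  case (match w x)
  then have "w = v \<or> x = v" using assms(3,4) by (auto split: if_splits)
  moreover have "m x = None" using match(3) by (simp add: is_min_rank_def candidates_def)
  ultimately have "x \<noteq> u" using match(1) assms(6,7) by auto
  then show ?thesis using match(6) assms(5) by simp
qed (use assms(5) in simp_all)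

text \<open>Either u is matched, or u's deadline precedes v's and v arrives before it; in the latter
  case v is an unmatched neighbour of u at u's deadline (while v is unmatched), so u gets matched.\<close>

definition matched_before_deadline ::
    "'v \<Rightarrow> 'v \<Rightarrow> 'v set \<Rightarrow> ('v \<Rightarrow> 'v option) \<Rightarrow> 'v event list \<Rightarrow> bool" where
  "matched_before_deadline u v A m evs \<longleftrightarrow> m u \<noteq> None \<or>
     (\<exists>xs ys. evs = xs @ Dl u # ys \<and> Dl v \<notin> set xs \<and> (v \<in> A \<or> Arr v \<in> set xs))"

lemma matched_before_deadline_Dl:
  "matched_before_deadline u v A m (Dl v # evs) \<Longrightarrow> u \<noteq> v \<Longrightarrow> m u \<noteq> None"
  unfolding matched_before_deadline_def by (auto simp: Cons_eq_append_conv)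

lemma matched_before_deadline_step:
  assumes "finite A" "rank_step E y (A, m, P) e = (A', m', P')" "m v = None" "E u v"
    "matched_before_deadline u v A m (e # evs)"
  shows "matched_before_deadline u v A' m' evs"
proof -
  have ext: "A \<subseteq> A'" "dom m \<subseteq> dom m'" using rank_step_extends[OF assms(1,2)] by auto
  show ?thesis
  proof (cases "m u = None")
    case False
    then show ?thesis using ext unfolding matched_before_deadline_def by blast
  next
    case unmatched: True
    then obtain xs ys where xs: "e # evs = xs @ Dl u # ys" "Dl v \<notin> set xs" "v \<in> A \<or> Arr v \<in> set xs"
      using assms(5) unfolding matched_before_deadline_def by blast
    show ?thesis
    proof (cases xs)
      case Nil
      then have "e = Dl u" "v \<in> candidates E A m u"
        using xs assms(3,4) by (auto simp: candidates_def)
      have "m' u \<noteq> None"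
        using assms(1,2)
        by (cases rule: rank_step_cases) (use \<open>e = Dl u\<close> \<open>v \<in> candidates E A m u\<close> unmatched in auto)
      then show ?thesis unfolding matched_before_deadline_def by blast
    next
      case (Cons e0 xs')
      then have "evs = xs' @ Dl u # ys" "Dl v \<notin> set xs'" using xs by auto
      moreover have "v \<in> A' \<or> Arr v \<in> set xs'"
      proof -
        have "e = Arr v \<Longrightarrow> v \<in> A'" using assms(2) by auto
        then show ?thesis using xs Cons ext by auto
      qed
      ultimately show ?thesis unfolding matched_before_deadline_def by blast
    qed
  qed
qed

lemma matched_before_deadline_init:
  assumes "valid_instance evs E" "E u v" "deadline_before evs u v"
  shows "matched_before_deadline u v {} (\<lambda>_. None) evs"
proof -
  obtain i j where ij: "i < j" "j < length evs" "evs ! i = Dl u" "evs ! j = Dl v"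
    using assms(3) unfolding deadline_before_def by blast
  have "distinct evs" using assms(1) unfolding valid_instance_def by blast
  have evs: "evs = take i evs @ Dl u # drop (Suc i) evs"
    using id_take_nth_drop[of i evs] ij by simp
  have "Dl v \<notin> set (take i evs)"
  proof
    assume "Dl v \<in> set (take i evs)"
    then obtain k where k: "k < i" "evs ! k = Dl v" by (auto simp: in_set_conv_nth)
    then have "k = j" using \<open>distinct evs\<close> ij nth_eq_iff_index_eq[of evs k j] by simp
    then show False using k ij by simp
  qed
  moreover have "Arr v \<in> set (take i evs)"
  proof -
    have "Arr v \<in> set evs" using assms(1,2) unfolding valid_instance_def by blast
    then obtain k where k: "k < length evs" "evs ! k = Arr v" by (auto simp: in_set_conv_nth)
    moreover have "i < length evs" using ij by simp
    ultimately have "k < i" using assms(1,2) ij unfolding valid_instance_def by blast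
    then show ?thesis using k by (auto simp: in_set_conv_nth)
  qed
  ultimately show ?thesis unfolding matched_before_deadline_def using evs by blast
qed

lemma rank_run_passive_raise_neighbour:
  assumes raise: "\<forall>w. w \<noteq> u \<longrightarrow> y' w = y w" "y u \<le> y' u"
    and removed: "\<forall>w. w \<noteq> v \<longrightarrow> yH w = y w"
    and "u \<noteq> v" "E u v"
  shows "finite A \<Longrightarrow> m v = None \<Longrightarrow> u \<notin> P \<Longrightarrow>
    u \<notin> snd (snd (foldl (rank_step (remove_E E v) yH) (A - {v}, m, P) (remove_evs evs v))) \<Longrightarrow>
    matched_before_deadline u v A m evs \<Longrightarrow>
    v \<in> snd (snd (foldl (rank_step E y) (A, m, P) evs)) \<longleftrightarrow>
    v \<in> snd (snd (foldl (rank_step E y') (A, m, P) evs))"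
proof (induction evs arbitrary: A m P)
  case Nil
  then show ?case by simp
next
  case (Cons e evs)
  obtain A' m' P' where step: "rank_step E y (A, m, P) e = (A', m', P')"
    by (metis prod_cases3)
  have fin: "finite A'" using rank_step_extends[OF Cons.prems(1) step] Cons.prems(1) by simp
  show ?case
  proof (cases "m' v = None")
    case True
    have "remove_evs (e # evs) v = remove_evs [e] v @ remove_evs evs v"
      by (simp add: remove_evs_def)
    then have "u \<notin> snd (snd (foldl (rank_step (remove_E E v) yH) (A' - {v}, m', P') (remove_evs evs v)))"
      using Cons.prems(4) rank_step_remove_unmatched[OF Cons.prems(1) step True removed]
      by (simp only: foldl_append not_False_eq_True)
    moreover from this have "u \<notin> P'" using rank_run_passive_mono[OF finite_Diff[OF fin]] by blast
    moreover have "matched_before_deadline u v A' m' evs"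
      using matched_before_deadline_step[OF Cons.prems(1) step Cons.prems(2) assms(5) Cons.prems(5)] .
    ultimately have "v \<in> snd (snd (foldl (rank_step E y) (A', m', P') evs)) \<longleftrightarrow>
        v \<in> snd (snd (foldl (rank_step E y') (A', m', P') evs))"
      using Cons.IH[of A' m' P'] fin True by blast
    moreover have "rank_step E y' (A, m, P) e = (A', m', P')"
      using rank_step_raise_unselected[OF Cons.prems(1) raise step] \<open>u \<notin> P'\<close> by blast
    ultimately show ?thesis using step by simp
  next
    case False
    have "m u \<noteq> None" if "e = Dl v"
      using matched_before_deadline_Dl[of u v A m evs] Cons.prems(5) assms(4) that by simp
    then have "u \<notin> P'"
      using not_passive_at_step_matching[OF Cons.prems(1) step Cons.prems(2) False Cons.prems(3) assms(4)]
      by blast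
    then have "rank_step E y' (A, m, P) e = (A', m', P')"
      using rank_step_raise_unselected[OF Cons.prems(1) raise step] by blast
    then show ?thesis using step rank_run_passive_matched[where m = m', OF fin False] by simp
  qed
qed

lemma is_passive_raise_neighbour:
  assumes "valid_instance evs E" "E u v" "deadline_before evs u v"
    and "\<not> is_passive (remove_evs evs v) (remove_E E v) (y(u := a)) u" "a \<le> b"
  shows "is_passive evs E (y(u := a, v := t)) v \<longleftrightarrow> is_passive evs E (y(u := b, v := t)) v"
proof -
  have "u \<noteq> v" using assms(1,2) unfolding valid_instance_def by blast
  have "v \<in> snd (snd (foldl (rank_step E (y(u := a, v := t))) ({}, \<lambda>_. None, {}) evs)) \<longleftrightarrow>
        v \<in> snd (snd (foldl (rank_step E (y(u := b, v := t))) ({}, \<lambda>_. None, {}) evs))"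
    by (rule rank_run_passive_raise_neighbour[where yH = "y(u := a)"])
      (use \<open>u \<noteq> v\<close> assms(2,4,5) matched_before_deadline_init[OF assms(1-3)]
        in \<open>auto simp: is_passive_def ranking_def\<close>)
  then show ?thesis by (simp add: is_passive_def ranking_def)
qed

theorem mainTheorem10:
  fixes evs :: "'v::linorder event list" and E :: "'v \<Rightarrow> 'v \<Rightarrow> bool"
    and u v :: 'v and y :: "'v \<Rightarrow> real"
  assumes "bipartite_instance evs E"
    and "E u v"
    and "deadline_before evs u v"
    and "\<forall>w. w \<noteq> u \<and> w \<noteq> v \<longrightarrow> 0 \<le> y w \<and> y w < 1"
  shows "\<exists>\<theta>\<in>{0..1}. \<forall>yu \<in> {0..1}.
           yu > marginal_rank (remove_evs evs v) (remove_E E v) y u \<longrightarrow>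
           marginal_rank evs E (y(u := yu)) v = \<theta>"
proof (intro bexI[of _ "marginal_rank evs E (y(u := 1)) v"] ballI impI)
  have valid: "valid_instance evs E" using assms(1) unfolding bipartite_instance_def by blast
  fix a :: real
  assume "a \<in> {0..1}" "marginal_rank (remove_evs evs v) (remove_E E v) y u < a"
  then have "\<not> is_passive (remove_evs evs v) (remove_E E v) (y(u := a)) u"
    by (rule not_passive_above_marginal_rank)
  then have "is_passive evs E (y(u := a, v := t)) v \<longleftrightarrow> is_passive evs E (y(u := 1, v := t)) v" for t
    using is_passive_raise_neighbour[OF valid assms(2,3)] \<open>a \<in> {0..1}\<close> by simp
  then show "marginal_rank evs E (y(u := a)) v = marginal_rank evs E (y(u := 1)) v"
    unfolding marginal_rank_def passive_below_def by simp
qed (rule marginal_rank_in_unit_interval)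

end
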